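(* (1) Every cograph is equivalent to a fat intersection cograph. (2a) Every finite cograph is equivalent to an inner product cograph. (2b) Every finite cograph is equivalent to a polynomial cograph. (3) Every finite cograph is equivalent to a geometric cograph in $\mathbb{R}^d$ for some (sufficiently large) $d$.
   Context: A cograph is a function $\mathcal{C}:\mathcal{P}^{(2)}\to\mathcal{E}$, where $\mathcal{P}$ is a set ("points"), $\mathcal{P}^{(2)}$ is the set of unordered pairs of distinct points, and $\mathcal{E}$ is a set ("edges"); one writes $\mathcal{C}(P,Q)$ for the value on $\{P,Q\}$. It is finite if $\mathcal{P}$ is finite. Two cographs $\mathcal{C}$ on $\mathcal{P}$ and $\mathcal{C}'$ on $\mathcal{P}'$ are equivalent if there is a bijection $\varphi:\mathcal{P}\to\mathcal{P}'$ such that for all pairs of distinct points, $\mathcal{C}(P,Q)=\mathcal{C}(R,S)$ iff $\mathcal{C}'(\varphi P,\varphi Q)=\mathcal{C}'(\varphi R,\varphi S)$ (i.e. cographs are considered up to relabeling points and edges). A fat intersection cograph is given by a collection $\mathcal{P}$ of distinct sets (the points) and a collection $\mathcal{S}$ of sets closed under intersection and containing $U=\bigcup_{P\in\mathcal{P}}P$; its edge $\mathcal{C}(P,Q)$ is the smallest set in $\mathcal{S}$ containing $P\cap Q$. An inner product cograph has as points distinct vectors of a real inner product space, with $\mathcal{C}(P,Q)=(P,Q)$ the inner product. A polynomial cograph has as points distinct elements of $\mathbb{Z}$ (or of $\mathbb{Z}_m$ for some $m$), with $\mathcal{C}(P,Q)=f(P,Q)$ for a fixed symmetric polynomial $f$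 in two variables with integer coefficients. A geometric cograph in $\mathbb{R}^d$ has as points distinct points of $\mathbb{R}^d$, with $\mathcal{C}(P,Q)$ the Euclidean distance between $P$ and $Q$. *)

theory Defs
  imports Complex_Main
begin

text \<open>A cograph is represented by a set of points Pts and a function C giving the
  edge of each pair of distinct points; C is required to be symmetric on distinct
  points of Pts, so that it is a function on unordered pairs of distinct points.
  Values of C on pairs (P,P) or outside Pts are irrelevant.\<close>

definition is_cograph :: "'p set \<Rightarrow> ('p \<Rightarrow> 'p \<Rightarrow> 'e) \<Rightarrow> bool" where
  "is_cograph Pts C \<longleftrightarrow> (\<forall>P\<in>Pts. \<forall>Q\<in>Pts. P \<noteq> Q \<longrightarrow> C P Q = C Q P)"

definition cograph_equiv ::
  "'p set \<Rightarrow> ('p \<Rightarrow> 'p \<Rightarrow> 'e) \<Rightarrow> 'q set \<Rightarrow> ('q \<Rightarrow> 'q \<Rightarrow> 'f) \<Rightarrow> bool" where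
  "cograph_equiv Pts C Pts' C' \<longleftrightarrow>
     (\<exists>\<phi>. bij_betw \<phi> Pts Pts' \<and>
       (\<forall>P\<in>Pts. \<forall>Q\<in>Pts. \<forall>R\<in>Pts. \<forall>S\<in>Pts. P \<noteq> Q \<longrightarrow> R \<noteq> S \<longrightarrow>
          (C P Q = C R S \<longleftrightarrow> C' (\<phi> P) (\<phi> Q) = C' (\<phi> R) (\<phi> S))))"

text \<open>The edge of P, Q is the smallest member of S containing
  P \<inter> Q, i.e. the intersection of all members of S containing P \<inter> Q.\<close>

definition fat_intersection_system :: "'u set set \<Rightarrow> 'u set set \<Rightarrow> bool" where
  "fat_intersection_system V S \<longleftrightarrow>
     \<Union>V \<in> S \<and> (\<forall>T. T \<subseteq> S \<longrightarrow> T \<noteq> {} \<longrightarrow> \<Inter>T \<in> S)"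

definition fat_edge :: "'u set set \<Rightarrow> 'u set \<Rightarrow> 'u set \<Rightarrow> 'u set" where
  "fat_edge S P Q = \<Inter>{A \<in> S. P \<inter> Q \<subseteq> A}"

text \<open>Standard inner product and Euclidean distance on R^d, with vectors represented
  as functions nat \<Rightarrow> real vanishing at coordinates \<ge> d.\<close>

definition in_Rd :: "nat \<Rightarrow> (nat \<Rightarrow> real) \<Rightarrow> bool" where
  "in_Rd d x \<longleftrightarrow> (\<forall>i\<ge>d. x i = 0)"

definition inner_Rd :: "nat \<Rightarrow> (nat \<Rightarrow> real) \<Rightarrow> (nat \<Rightarrow> real) \<Rightarrow> real" where
  "inner_Rd d x y = (\<Sum>i<d. x i * y i)"

definition dist_Rd :: "nat \<Rightarrow> (nat \<Rightarrow> real) \<Rightarrow> (nat \<Rightarrow> real) \<Rightarrow> real" where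
  "dist_Rd d x y = sqrt (\<Sum>i<d. (x i - y i)^2)"

text \<open>It is symmetric iff its coefficient array is symmetric.\<close>

definition poly2 :: "(nat \<Rightarrow> nat \<Rightarrow> int) \<Rightarrow> nat \<Rightarrow> int \<Rightarrow> int \<Rightarrow> int" where
  "poly2 a n x y = (\<Sum>i\<le>n. \<Sum>j\<le>n. a i j * x ^ i * y ^ j)"

definition symmetric_coeffs :: "(nat \<Rightarrow> nat \<Rightarrow> int) \<Rightarrow> bool" where
  "symmetric_coeffs a \<longleftrightarrow> (\<forall>i j. a i j = a j i)"

end

theory Submission
  imports Defs "HOL-Library.Nat_Bijection" "HOL-Number_Theory.Number_Theory"
    "HOL-Computational_Algebra.Polynomial"
begin

(* (1) Replace P by its star, the set of all pairs {P, R} with R in Pts (R = P allowed). Two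
   distinct stars meet exactly in {{P, Q}}, and the classes E c of pairs with edge c are pairwise
   disjoint, so in S = {U, {}} together with all E c the smallest member containing {{P, Q}} is
   E (C P Q).
   (2a) Code the edges by natural numbers. Any symmetric array is, off the diagonal, a Gram
   array, using one coordinate per pair of points; one more private coordinate per point then
   makes all norms equal to a common M.
   (3) For vectors of norm M, |x - y|^2 = 2M - 2(x, y), so distances and inner products
   determine each other.
   (2b) Label the points by distinct primes x_P, so that the product x_P x_Q determines {P, Q}.
   For a prime p exceeding all these products and twice all codes, Fermat's little theorem makes
   F(t) = sum of code(P, Q) (1 - (t - x_P x_Q)^(p-1)) over ordered pairs an interpolating
   polynomial mod p, and f(x, y) = F(xy) is symmetric. *)

definition cograph_edges :: "'p set \<Rightarrow> ('p \<Rightarrow> 'p \<Rightarrow> 'e) \<Rightarrow> 'e set" where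
  "cograph_edges Pts C = {C P Q | P Q. P \<in> Pts \<and> Q \<in> Pts \<and> P \<noteq> Q}"

lemma finite_cograph_edges: "finite Pts \<Longrightarrow> finite (cograph_edges Pts C)"
proof -
  assume "finite Pts"
  moreover have "cograph_edges Pts C \<subseteq> (\<lambda>(P, Q). C P Q) ` (Pts \<times> Pts)"
    unfolding cograph_edges_def by auto
  ultimately show ?thesis
    by (meson finite_SigmaI finite_imageI finite_subset)
qed

lemma cograph_equivI:
  assumes "bij_betw \<phi> Pts V"
    and "inj_on c (cograph_edges Pts C)"
    and "\<And>P Q. P \<in> Pts \<Longrightarrow> Q \<in> Pts \<Longrightarrow> P \<noteq> Q \<Longrightarrow> C' (\<phi> P) (\<phi> Q) = c (C P Q)"
  shows "cograph_equiv Pts C V C'"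
  unfolding cograph_equiv_def
proof (intro exI conjI ballI impI)
  fix P Q R S assume PQRS: "P \<in> Pts" "Q \<in> Pts" "R \<in> Pts" "S \<in> Pts" "P \<noteq> Q" "R \<noteq> S"
  then have "C P Q \<in> cograph_edges Pts C" "C R S \<in> cograph_edges Pts C"
    unfolding cograph_edges_def by blast+
  then show "C P Q = C R S \<longleftrightarrow> C' (\<phi> P) (\<phi> Q) = C' (\<phi> R) (\<phi> S)"
    using assms(3) PQRS inj_on_eq_iff[OF assms(2)] by simp
qed (fact assms(1))

lemma cograph_equiv_recode:
  assumes "cograph_equiv Pts C V C'" and "inj f"
    and "\<And>x y. x \<in> V \<Longrightarrow> y \<in> V \<Longrightarrow> x \<noteq> y \<Longrightarrow> C'' x y = f (C' x y)"
  shows "cograph_equiv Pts C V C''"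
proof -
  obtain \<phi> where \<phi>: "bij_betw \<phi> Pts V"
    and edges: "\<forall>P\<in>Pts. \<forall>Q\<in>Pts. \<forall>R\<in>Pts. \<forall>S\<in>Pts. P \<noteq> Q \<longrightarrow> R \<noteq> S \<longrightarrow>
          (C P Q = C R S \<longleftrightarrow> C' (\<phi> P) (\<phi> Q) = C' (\<phi> R) (\<phi> S))"
    using assms(1) unfolding cograph_equiv_def by blast
  have "\<phi> P \<in> V" "\<phi> P \<noteq> \<phi> Q" if "P \<in> Pts" "Q \<in> Pts" "P \<noteq> Q" for P Q
    using that \<phi> by (auto simp: bij_betw_def inj_on_eq_iff)
  then show ?thesis
    unfolding cograph_equiv_def using \<phi> edges assms(3) inj_eq[OF assms(2)] by (intro exI[of _ \<phi>]) simp
qed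

lemma fat_intersection_system_disjoint_family:
  assumes sub: "\<And>c. E c \<subseteq> \<Union>V"
    and disj: "\<And>c c'. c \<noteq> c' \<Longrightarrow> E c \<inter> E c' = {}"
  shows "fat_intersection_system V (insert (\<Union>V) (insert {} (range E)))"
  unfolding fat_intersection_system_def
proof (intro conjI allI impI)
  fix T assume T: "T \<subseteq> insert (\<Union>V) (insert {} (range E))" "T \<noteq> {}"
  show "\<Inter>T \<in> insert (\<Union>V) (insert {} (range E))"
  proof (cases "T - {\<Union>V} \<subseteq> range E")
    case True
    show ?thesis
    proof (cases "\<exists>c c'. E c \<in> T \<and> E c' \<in> T \<and> c \<noteq> c'")
      case True
      then have "\<Inter>T = {}" using disj by blast
      then show ?thesis by simp
    next
      case False
      show ?thesis
      proof (cases "T \<subseteq> {\<Union>V}")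
        case True
        then have "T = {\<Union>V}" using T(2) by blast
        then show ?thesis by simp
      next
        case False
        then obtain c where "E c \<in> T" using \<open>T - {\<Union>V} \<subseteq> range E\<close> by blast
        then have "T \<subseteq> {\<Union>V, E c}"
          using \<open>T - {\<Union>V} \<subseteq> range E\<close> \<open>\<not> (\<exists>c c'. E c \<in> T \<and> E c' \<in> T \<and> c \<noteq> c')\<close> by blast
        then have "\<Inter>T = E c" using \<open>E c \<in> T\<close> sub[of c] by blast
        then show ?thesis by simp
      qed
    qed
  next
    case False
    then have "{} \<in> T" using T(1) by blast
    then show ?thesis by auto
  qed
qed simp

lemma fat_edge_disjoint_family:
  assumes sub: "\<And>c. E c \<subseteq> \<Union>V"
    and disj: "\<And>c c'. c \<noteq> c' \<Longrightarrow> E c \<inter> E c' = {}"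
    and "A \<inter> B = {x}" and "x \<in> E c"
  shows "fat_edge (insert (\<Union>V) (insert {} (range E))) A B = E c"
proof -
  have "E c' \<inter> (A \<inter> B) \<noteq> {} \<longleftrightarrow> c' = c" for c'
    using disj[of c' c] assms(3,4) by auto
  then have "{X \<in> insert (\<Union>V) (insert {} (range E)). A \<inter> B \<subseteq> X} = {\<Union>V, E c}"
    using assms(3,4) sub[of c] by auto
  then show ?thesis
    unfolding fat_edge_def using sub[of c] by auto
qed

lemma fat_intersection_cograph_equiv:
  fixes Pts :: "'p set" and C :: "'p \<Rightarrow> 'p \<Rightarrow> 'e"
  assumes "is_cograph Pts C"
  shows "\<exists>(V :: 'p set set set) S. fat_intersection_system V S \<and> cograph_equiv Pts C V (fat_edge S)"
proof -
  define star where "star P = {{P, R} | R. R \<in> Pts}" for P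
  define E where "E c = {{R, S} | R S. R \<in> Pts \<and> S \<in> Pts \<and> R \<noteq> S \<and> C R S = c}" for c
  define V where "V = star ` Pts"
  have pair_in_E: "{P, Q} \<in> E c \<longleftrightarrow> C P Q = c" if "P \<in> Pts" "Q \<in> Pts" "P \<noteq> Q" for P Q c
    using assms that unfolding E_def is_cograph_def by (auto simp: doubleton_eq_iff)
  have sub: "E c \<subseteq> \<Union>V" for c
    unfolding E_def V_def star_def by blast
  have disj: "E c \<inter> E c' = {}" if "c \<noteq> c'" for c c'
  proof -
    have False if "X \<in> E c" "X \<in> E c'" for X
    proof -
      obtain R S where "X = {R, S}" "R \<in> Pts" "S \<in> Pts" "R \<noteq> S" "C R S = c"
        using \<open>X \<in> E c\<close> unfolding E_def by blast
      then show False
        using pair_in_E \<open>X \<in> E c'\<close> \<open>c \<noteq> c'\<close> by blast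
    qed
    then show ?thesis by blast
  qed
  have "inj_on star Pts"
  proof (rule inj_onI)
    fix P Q assume "P \<in> Pts" "Q \<in> Pts" "star P = star Q"
    then have "{P} \<in> star Q" unfolding star_def by blast
    then show "P = Q" unfolding star_def by (auto simp: doubleton_eq_iff)
  qed
  then have "bij_betw star Pts V"
    unfolding V_def by (simp add: bij_betw_imageI)
  moreover have "inj_on E (cograph_edges Pts C)"
  proof (rule inj_onI)
    fix c c' assume "c \<in> cograph_edges Pts C" "E c = E c'"
    then obtain P Q where "P \<in> Pts" "Q \<in> Pts" "P \<noteq> Q" "c = C P Q"
      unfolding cograph_edges_def by blast
    then show "c = c'"
      using pair_in_E \<open>E c = E c'\<close> by metis
  qed
  moreover have "fat_edge (insert (\<Union>V) (insert {} (range E))) (star P) (star Q) = E (C P Q)"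
    if "P \<in> Pts" "Q \<in> Pts" "P \<noteq> Q" for P Q
  proof (rule fat_edge_disjoint_family[OF sub disj])
    show "star P \<inter> star Q = {{P, Q}}"
      using that unfolding star_def by (auto simp: doubleton_eq_iff)
    show "{P, Q} \<in> E (C P Q)"
      using pair_in_E[OF that] by blast
  qed
  ultimately have "cograph_equiv Pts C V (fat_edge (insert (\<Union>V) (insert {} (range E))))"
    by (rule cograph_equivI)
  then show ?thesis
    using fat_intersection_system_disjoint_family[of E V, OF sub disj] by blast
qed

lemma off_diagonal_gram_realization:
  fixes G :: "'p \<Rightarrow> 'p \<Rightarrow> real"
  assumes fin: "finite Pts"
    and sym: "\<And>P Q. P \<in> Pts \<Longrightarrow> Q \<in> Pts \<Longrightarrow> P \<noteq> Q \<Longrightarrow> G P Q = G Q P"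
  shows "\<exists>d u. \<forall>P\<in>Pts. \<forall>Q\<in>Pts. P \<noteq> Q \<longrightarrow> inner_Rd d (u P) (u Q) = G P Q"
proof -
  obtain \<iota> :: "'p \<Rightarrow> nat" where \<iota>: "inj_on \<iota> Pts"
    using finite_imp_inj_to_nat_seg[OF fin] by blast
  \<comment> \<open>coordinate \<open>(a, b)\<close>, \<open>a < b\<close>, is \<open>1\<close> for the point indexed \<open>a\<close>
    and \<open>G\<close> for the point indexed \<open>b\<close>\<close>
  define w where "w P = (\<lambda>(a, b). if a < b \<and> a = \<iota> P then 1
      else if a < b \<and> b = \<iota> P then G (inv_into Pts \<iota> a) P else 0)" for P
  define d where "d = Suc (Max (prod_encode ` (\<iota> ` Pts \<times> \<iota> ` Pts)))"
  define u where "u P k = w P (prod_decode k)" for P k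
  have "inner_Rd d (u P) (u Q) = G P Q" if PQ: "P \<in> Pts" "Q \<in> Pts" "P \<noteq> Q" for P Q
  proof -
    define z where "z = (min (\<iota> P) (\<iota> Q), max (\<iota> P) (\<iota> Q))"
    have "\<iota> P \<noteq> \<iota> Q" using \<iota> PQ by (meson inj_on_eq_iff)
    then have w_prod: "w P y * w Q y = (if y = z then G P Q else 0)" for y
      using sym[OF PQ] PQ \<iota> unfolding w_def z_def by (cases y) auto
    have "z \<in> \<iota> ` Pts \<times> \<iota> ` Pts"
      using PQ unfolding z_def by (auto simp: min_def max_def)
    then have "prod_encode z < d"
      unfolding d_def using fin by (simp add: le_imp_less_Suc)
    have "inner_Rd d (u P) (u Q) = (\<Sum>k<d. if k = prod_encode z then G P Q else 0)"
      unfolding inner_Rd_def u_def using w_prod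
      by (intro sum.cong) auto
    also have "\<dots> = G P Q"
      using \<open>prod_encode z < d\<close> by simp
    finally show ?thesis .
  qed
  then show ?thesis by blast
qed

lemma inner_Rd_self_nonneg: "0 \<le> inner_Rd d x x"
  unfolding inner_Rd_def by (intro sum_nonneg) simp

lemma equal_norm_gram_realization:
  fixes G :: "'p \<Rightarrow> 'p \<Rightarrow> real"
  assumes fin: "finite Pts"
    and sym: "\<And>P Q. P \<in> Pts \<Longrightarrow> Q \<in> Pts \<Longrightarrow> P \<noteq> Q \<Longrightarrow> G P Q = G Q P"
  shows "\<exists>d x M. inj_on x Pts \<and> (\<forall>P\<in>Pts. in_Rd d (x P)) \<and>
           (\<forall>P\<in>Pts. \<forall>Q\<in>Pts. P \<noteq> Q \<longrightarrow> inner_Rd d (x P) (x Q) = G P Q) \<and>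
           (\<forall>P\<in>Pts. inner_Rd d (x P) (x P) = M)"
proof -
  obtain d u where u: "\<forall>P\<in>Pts. \<forall>Q\<in>Pts. P \<noteq> Q \<longrightarrow> inner_Rd d (u P) (u Q) = G P Q"
    using off_diagonal_gram_realization[of Pts G, OF fin sym] by blast
  obtain \<iota> :: "'p \<Rightarrow> nat" and n where \<iota>: "\<iota> ` Pts = {i. i < n}" "inj_on \<iota> Pts"
    using finite_imp_inj_to_nat_seg[OF fin] by blast
  define M where "M = 1 + (\<Sum>P\<in>Pts. inner_Rd d (u P) (u P))"
  define s where "s P = sqrt (M - inner_Rd d (u P) (u P))" for P
  have norm_u_less: "inner_Rd d (u P) (u P) < M" if "P \<in> Pts" for P
  proof -
    have "inner_Rd d (u P) (u P) \<le> (\<Sum>P\<in>Pts. inner_Rd d (u P) (u P))"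
      using fin that by (intro member_le_sum inner_Rd_self_nonneg)
    then show ?thesis unfolding M_def by simp
  qed
  then have s_pos: "s P > 0" and s_sq: "s P * s P = M - inner_Rd d (u P) (u P)"
    if "P \<in> Pts" for P
    using norm_u_less[OF that] unfolding s_def by simp_all
  define x where "x P k = (if k < d then u P k else if k = d + \<iota> P then s P else 0)" for P k
  have \<iota>_less: "\<iota> P < n" if "P \<in> Pts" for P
    using \<iota>(1) that by blast
  have inner_x: "inner_Rd (d + n) (x P) (x Q) =
      inner_Rd d (u P) (u Q) + (if \<iota> P = \<iota> Q then s P * s Q else 0)"
    if "P \<in> Pts" "Q \<in> Pts" for P Q
  proof -
    have "inner_Rd (d + n) (x P) (x Q) = (\<Sum>k<d. x P k * x Q k) + (\<Sum>k\<in>{d..<d+n}. x P k * x Q k)"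
      unfolding inner_Rd_def
      by (simp add: sum.atLeastLessThan_concat[of 0 d "d + n", symmetric] lessThan_atLeast0)
    also have "(\<Sum>k<d. x P k * x Q k) = inner_Rd d (u P) (u Q)"
      unfolding inner_Rd_def x_def by simp
    also have "(\<Sum>k\<in>{d..<d+n}. x P k * x Q k) =
        (\<Sum>k\<in>{d..<d+n}. if k = d + \<iota> P then (if \<iota> P = \<iota> Q then s P * s Q else 0) else 0)"
      by (intro sum.cong) (auto simp: x_def)
    also have "\<dots> = (if \<iota> P = \<iota> Q then s P * s Q else 0)"
      using \<iota>_less[OF that(1)] by simp
    finally show ?thesis .
  qed
  have "inj_on x Pts"
  proof (rule inj_onI)
    fix P Q assume "P \<in> Pts" "Q \<in> Pts" "x P = x Q"
    moreover have "x P (d + \<iota> P) = s P" "x Q (d + \<iota> P) = (if \<iota> P = \<iota> Q then s Q else 0)"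
      unfolding x_def by auto
    ultimately have "\<iota> P = \<iota> Q"
      using s_pos[OF \<open>P \<in> Pts\<close>] by (auto split: if_splits)
    then show "P = Q" using \<iota>(2) \<open>P \<in> Pts\<close> \<open>Q \<in> Pts\<close> by (meson inj_on_eq_iff)
  qed
  moreover have "in_Rd (d + n) (x P)" if "P \<in> Pts" for P
    using \<iota>_less[OF that] unfolding in_Rd_def x_def by auto
  moreover have "inner_Rd (d + n) (x P) (x Q) = G P Q" if "P \<in> Pts" "Q \<in> Pts" "P \<noteq> Q" for P Q
    using inner_x[OF that(1,2)] u that \<iota>(2) by (simp add: inj_on_eq_iff)
  moreover have "inner_Rd (d + n) (x P) (x P) = M" if "P \<in> Pts" for P
    using inner_x[OF that that] s_sq[OF that] by simp
  ultimately show ?thesis by blast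
qed

lemma inner_product_cograph_equiv:
  fixes C :: "'p \<Rightarrow> 'p \<Rightarrow> 'e"
  assumes "is_cograph Pts C" and "finite Pts"
  shows "\<exists>d V M. (\<forall>v\<in>V. in_Rd d v) \<and> (\<forall>v\<in>V. inner_Rd d v v = M) \<and>
           cograph_equiv Pts C V (inner_Rd d)"
proof -
  obtain \<kappa> :: "'e \<Rightarrow> nat" where \<kappa>: "inj_on \<kappa> (cograph_edges Pts C)"
    using finite_imp_inj_to_nat_seg[OF finite_cograph_edges[OF assms(2)]] by metis
  have "real (\<kappa> (C P Q)) = real (\<kappa> (C Q P))" if "P \<in> Pts" "Q \<in> Pts" "P \<noteq> Q" for P Q
    using assms(1) that unfolding is_cograph_def by metis
  then obtain d x M where x: "inj_on x Pts" "\<forall>P\<in>Pts. in_Rd d (x P)"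
      "\<forall>P\<in>Pts. \<forall>Q\<in>Pts. P \<noteq> Q \<longrightarrow> inner_Rd d (x P) (x Q) = real (\<kappa> (C P Q))"
      "\<forall>P\<in>Pts. inner_Rd d (x P) (x P) = M"
    using equal_norm_gram_realization[of Pts "\<lambda>P Q. real (\<kappa> (C P Q))", OF assms(2)] by blast
  have "cograph_equiv Pts C (x ` Pts) (inner_Rd d)"
  proof (rule cograph_equivI)
    show "bij_betw x Pts (x ` Pts)" using x(1) by (simp add: bij_betw_imageI)
    show "inj_on (\<lambda>t. real (\<kappa> t)) (cograph_edges Pts C)"
      using \<kappa> by (simp add: inj_on_def)
  qed (use x(3) in simp)
  then show ?thesis using x(2,4) by blast
qed

lemma dist_Rd_eq_sqrt_inner:
  "dist_Rd d x y = sqrt (inner_Rd d x x + inner_Rd d y y - 2 * inner_Rd d x y)"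
proof -
  have "(\<Sum>i<d. (x i - y i)\<^sup>2) = (\<Sum>i<d. x i * x i + y i * y i - 2 * (x i * y i))"
    by (intro sum.cong) (auto simp: power2_eq_square algebra_simps)
  also have "\<dots> = inner_Rd d x x + inner_Rd d y y - 2 * inner_Rd d x y"
    unfolding inner_Rd_def by (simp add: sum.distrib sum_subtractf sum_distrib_left)
  finally show ?thesis unfolding dist_Rd_def by simp
qed

lemma geometric_cograph_equiv:
  assumes "is_cograph Pts C" and "finite Pts"
  shows "\<exists>d V. (\<forall>v\<in>V. in_Rd d v) \<and> cograph_equiv Pts C V (dist_Rd d)"
proof -
  obtain d V M where V: "\<forall>v\<in>V. in_Rd d v" "\<forall>v\<in>V. inner_Rd d v v = M"
    and equiv: "cograph_equiv Pts C V (inner_Rd d)"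
    using inner_product_cograph_equiv[OF assms] by blast
  have "cograph_equiv Pts C V (dist_Rd d)"
  proof (rule cograph_equiv_recode[OF equiv])
    show "inj (\<lambda>t. sqrt (2 * M - 2 * t))"
      \<comment> \<open>HOL's \<open>sqrt\<close> is odd, hence injective on all of \<open>\<real>\<close>\<close>
      by (simp add: inj_on_def)
    show "dist_Rd d v w = sqrt (2 * M - 2 * inner_Rd d v w)" if "v \<in> V" "w \<in> V" for v w
      using V(2) that by (simp add: dist_Rd_eq_sqrt_inner)
  qed
  then show ?thesis using V(1) by blast
qed

lemma fermat_theorem_int:
  fixes p :: nat and a :: int
  assumes "prime p" and "\<not> int p dvd a"
  shows "[a ^ (p - 1) = 1] (mod int p)"
proof -
  have "residues (int p)"
    using prime_gt_1_nat[OF assms(1)] by unfold_locales simp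
  moreover have "coprime a (int p)"
    using assms prime_imp_coprime[of "int p" a] by (simp add: coprime_commute)
  ultimately show ?thesis
    using residues.euler_theorem totient_prime[OF assms(1)] by fastforce
qed

lemma fermat_indicator_cong:
  fixes p :: nat and a :: int
  assumes "prime p"
  shows "[1 - a ^ (p - 1) = (if int p dvd a then 1 else 0)] (mod int p)"
proof (cases "int p dvd a")
  case True
  have "p - 1 \<noteq> 0" using prime_gt_1_nat[OF assms] by simp
  then have "[a ^ (p - 1) = 0] (mod int p)"
    using True dvd_power_le[OF True, of 1 "p - 1"] by (simp add: cong_0_iff)
  then show ?thesis
    using True cong_diff[of 1 1 "int p"] by fastforce
next
  case False
  then show ?thesis
    using fermat_theorem_int[OF assms False] cong_diff[of 1 1 "int p"] by fastforce
qed

lemma poly_fermat_interpolation_cong: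
  fixes s c :: "'i \<Rightarrow> int" and p :: nat
  assumes "prime p" and "finite I"
  shows "[poly (\<Sum>i\<in>I. smult (c i) (1 - [:- s i, 1:] ^ (p - 1))) t =
          (\<Sum>i\<in>{i\<in>I. [s i = t] (mod int p)}. c i)] (mod int p)"
proof -
  have "poly (\<Sum>i\<in>I. smult (c i) (1 - [:- s i, 1:] ^ (p - 1))) t =
        (\<Sum>i\<in>I. c i * (1 - (t - s i) ^ (p - 1)))"
    by (simp add: poly_sum)
  also have "[\<dots> = (\<Sum>i\<in>I. c i * (if int p dvd (t - s i) then 1 else 0))] (mod int p)"
    by (intro cong_sum cong_scalar_left fermat_indicator_cong[OF assms(1)])
  also have "(\<Sum>i\<in>I. c i * (if int p dvd (t - s i) then 1 else 0)) =
             (\<Sum>i\<in>I. if [s i = t] (mod int p) then c i else 0)"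
    by (intro sum.cong) (auto simp: cong_iff_dvd_diff dvd_diff_commute)
  also have "\<dots> = (\<Sum>i\<in>{i\<in>I. [s i = t] (mod int p)}. c i)"
    using assms(2) by (simp add: sum.inter_filter)
  finally show ?thesis .
qed

lemma poly2_diagonal:
  "poly2 (\<lambda>i j. if i = j then coeff F i else 0) (degree F) x y = poly F (x * y)"
proof -
  have diag: "(\<Sum>j\<le>degree F. (if i = j then coeff F i else 0) * x ^ i * y ^ j) =
      coeff F i * (x * y) ^ i" if "i \<le> degree F" for i
  proof -
    have "(\<Sum>j\<le>degree F. (if i = j then coeff F i else 0) * x ^ i * y ^ j) =
          (\<Sum>j\<le>degree F. if j = i then coeff F i * (x * y) ^ i else 0)"
      by (intro sum.cong) (auto simp: power_mult_distrib)
    then show ?thesis using that by simp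
  qed
  show ?thesis
    unfolding poly2_def poly_altdef by (intro sum.cong) (simp_all add: diag)
qed

lemma prime_products_eq:
  fixes a b c d :: nat
  assumes "prime a" "prime c" "prime d" and "a * b = c * d"
  shows "a = c \<and> b = d \<or> a = d \<and> b = c"
proof -
  have "a dvd c * d" using assms(4) by (metis dvd_triv_left)
  then have "a = c \<or> a = d"
    using assms(1-3) by (metis prime_dvd_mult_iff primes_dvd_imp_eq)
  moreover have "a \<noteq> 0" using assms(1) by auto
  ultimately show ?thesis
    using assms(4) by (metis mult.commute mult_left_cancel)
qed

lemma ex_inj_on_primes:
  assumes "finite A"
  shows "\<exists>x :: 'a \<Rightarrow> nat. inj_on x A \<and> (\<forall>P\<in>A. prime (x P))"
proof -
  obtain B :: "nat set" where B: "finite B" "card B = card A" "B \<subseteq> {p. prime p}"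
    using infinite_arbitrarily_large[OF primes_infinite] by blast
  then obtain x where "bij_betw x A B"
    using finite_same_card_bij[OF assms] by metis
  then show ?thesis
    using B(3) by (auto simp: bij_betw_def)
qed

lemma polynomial_mod_prime_cograph_equiv:
  fixes C :: "'p \<Rightarrow> 'p \<Rightarrow> 'e"
  assumes cograph: "is_cograph Pts C" and fin: "finite Pts"
  shows "\<exists>a n (m :: int) (V :: int set). symmetric_coeffs a \<and> m > 0 \<and> V \<subseteq> {0..<m} \<and>
           cograph_equiv Pts C V (\<lambda>x y. poly2 a n x y mod m)"
proof -
  obtain \<kappa> :: "'e \<Rightarrow> nat" and N
    where \<kappa>: "\<kappa> ` cograph_edges Pts C = {i. i < N}" "inj_on \<kappa> (cograph_edges Pts C)"
    using finite_imp_inj_to_nat_seg[OF finite_cograph_edges[OF fin]] by metis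
  obtain x :: "'p \<Rightarrow> nat" where x: "inj_on x Pts" "\<forall>P\<in>Pts. prime (x P)"
    using ex_inj_on_primes[OF fin] by blast
  define K where "K = Max (insert 0 (x ` Pts))"
  have x_le: "x P \<le> K" if "P \<in> Pts" for P
    unfolding K_def using fin that by simp
  obtain p where p: "prime p" "2 * N + K * K < p"
    using bigger_prime by blast
  define Pr where "Pr = {(P, Q). P \<in> Pts \<and> Q \<in> Pts \<and> P \<noteq> Q}"
  define s where "s q = int (x (fst q) * x (snd q))" for q
  define c where "c q = int (\<kappa> (C (fst q) (snd q)))" for q
  define F :: "int poly" where "F = (\<Sum>q\<in>Pr. smult (c q) (1 - [:- s q, 1:] ^ (p - 1)))"
  define a where "a i j = (if i = j then coeff F i else 0)" for i j
  have "finite Pr"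
    unfolding Pr_def by (rule finite_subset[of _ "Pts \<times> Pts"]) (use fin in auto)
  have s_range: "0 \<le> s q \<and> s q < int p" if "q \<in> Pr" for q
  proof -
    have "x (fst q) * x (snd q) \<le> K * K"
      using that x_le unfolding Pr_def by (auto intro: mult_le_mono)
    then have "x (fst q) * x (snd q) < p" using p(2) by linarith
    then show ?thesis unfolding s_def by (simp del: of_nat_mult)
  qed
  have same_product: "{q \<in> Pr. [s q = s (P, Q)] (mod int p)} = {(P, Q), (Q, P)}"
    if PQ: "P \<in> Pts" "Q \<in> Pts" "P \<noteq> Q" for P Q
  proof -
    have "(P, Q) \<in> Pr" using PQ unfolding Pr_def by simp
    have "[s (R, S) = s (P, Q)] (mod int p) \<longleftrightarrow> (R = P \<and> S = Q \<or> R = Q \<and> S = P)"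
      if "(R, S) \<in> Pr" for R S
    proof -
      have "[s (R, S) = s (P, Q)] (mod int p) \<longleftrightarrow> s (R, S) = s (P, Q)"
        using cong_less_imp_eq_int[of "s (R, S)" "int p" "s (P, Q)"]
          s_range[OF that] s_range[OF \<open>(P, Q) \<in> Pr\<close>] by auto
      also have "\<dots> \<longleftrightarrow> x R * x S = x P * x Q"
        unfolding s_def by (simp only: of_nat_eq_iff fst_conv snd_conv)
      also have "\<dots> \<longleftrightarrow> (x R = x P \<and> x S = x Q \<or> x R = x Q \<and> x S = x P)"
      proof
        assume "x R * x S = x P * x Q"
        then show "x R = x P \<and> x S = x Q \<or> x R = x Q \<and> x S = x P"
          using prime_products_eq[of "x R" "x P" "x Q" "x S"] x(2) that PQ unfolding Pr_def by auto
      qed (auto simp: mult.commute)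
      also have "\<dots> \<longleftrightarrow> (R = P \<and> S = Q \<or> R = Q \<and> S = P)"
        using x(1) that PQ unfolding Pr_def by (auto simp: inj_on_eq_iff)
      finally show ?thesis .
    qed
    then show ?thesis using PQ unfolding Pr_def by auto
  qed
  \<comment> \<open>the interpolation runs over ordered pairs, so every edge code is counted twice\<close>
  have labelled_value: "poly2 a (degree F) (int (x P)) (int (x Q)) mod int p = 2 * int (\<kappa> (C P Q))"
    if PQ: "P \<in> Pts" "Q \<in> Pts" "P \<noteq> Q" for P Q
  proof -
    have "[poly F (s (P, Q)) = c (P, Q) + c (Q, P)] (mod int p)"
      using poly_fermat_interpolation_cong[OF p(1) \<open>finite Pr\<close>, of c s "s (P, Q)"]
      unfolding F_def same_product[OF PQ] using PQ by simp
    moreover have "c (Q, P) = c (P, Q)"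
      using cograph PQ unfolding c_def is_cograph_def by simp
    moreover have "\<kappa> (C P Q) < N"
      using \<kappa>(1) PQ unfolding cograph_edges_def by blast
    ultimately show ?thesis
      using p(2) unfolding a_def poly2_diagonal c_def s_def cong_def by simp
  qed
  have "cograph_equiv Pts C ((\<lambda>P. int (x P)) ` Pts) (\<lambda>y z. poly2 a (degree F) y z mod int p)"
  proof (rule cograph_equivI[where c = "\<lambda>t. 2 * int (\<kappa> t)"])
    show "bij_betw (\<lambda>P. int (x P)) Pts ((\<lambda>P. int (x P)) ` Pts)"
      using x(1) by (simp add: bij_betw_imageI inj_on_def)
    show "inj_on (\<lambda>t. 2 * int (\<kappa> t)) (cograph_edges Pts C)"
      using \<kappa>(2) by (simp add: inj_on_def)
  qed (use labelled_value in simp)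
  moreover have "(\<lambda>P. int (x P)) ` Pts \<subseteq> {0..<int p}"
  proof -
    have "x P < p" if "P \<in> Pts" for P
      using x_le[OF that] le_square[of K] p(2) by linarith
    then show ?thesis by auto
  qed
  moreover have "symmetric_coeffs a"
    unfolding symmetric_coeffs_def a_def by simp
  moreover have "int p > 0"
    using prime_gt_0_nat[OF p(1)] by simp
  ultimately show ?thesis by blast
qed

theorem theorem1p1:
  fixes Pts :: "'p set" and C :: "'p \<Rightarrow> 'p \<Rightarrow> 'e"
  assumes "is_cograph Pts C"
  shows
    "(\<exists>(V :: 'p set set set) (S :: 'p set set set).
        fat_intersection_system V S \<and> cograph_equiv Pts C V (fat_edge S))
     \<and> (finite Pts \<longrightarrow>
          (\<exists>d (V :: (nat \<Rightarrow> real) set). (\<forall>v\<in>V. in_Rd d v) \<and>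
              cograph_equiv Pts C V (inner_Rd d)))
     \<and> (finite Pts \<longrightarrow>
          (\<exists>a n. symmetric_coeffs a \<and>
             ((\<exists>V :: int set. cograph_equiv Pts C V (poly2 a n)) \<or>
              (\<exists>(m::int) (V :: int set). m > 0 \<and> V \<subseteq> {0..<m} \<and>
                  cograph_equiv Pts C V (\<lambda>x y. poly2 a n x y mod m)))))
     \<and> (finite Pts \<longrightarrow>
          (\<exists>d (V :: (nat \<Rightarrow> real) set). (\<forall>v\<in>V. in_Rd d v) \<and>
              cograph_equiv Pts C V (dist_Rd d)))"
  using fat_intersection_cograph_equiv[OF assms] inner_product_cograph_equiv[OF assms]
    polynomial_mod_prime_cograph_equiv[OF assms] geometric_cograph_equiv[OF assms]
  by blast

end
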